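(* Suppose Assumptions 1–4 hold and $p$ is convex. Let $\mathbf{x}^S$ be a social optimum and $\mathbf{x}^P$ a monopoly output, with $X^S=\sum_n x_n^S$, $X^P=\sum_n x_n^P$. (a) If $p(X^P)=p(X^S)$, then $\gamma(\mathbf{x}^P)=1$. (b) If $p(X^P)\ne p(X^S)$, then $p$ is differentiable at $X^P$; letting $c=|p'(X^P)|$, $d=\left|\dfrac{p(X^S)-p(X^P)}{X^S-X^P}\right|$ and $\overline c=c/d$, we have $\overline c\ge1$ and $\gamma(\mathbf{x}^P)\ge\dfrac{3}{3+\overline c}$. (c) The bound is tight at $\overline c=1$: there exists a model satisfying these hypotheses with $\overline c=1$ and a monopoly output whose efficiency is exactly $3/4$.
   Context: Cournot model: $N$ suppliers, inverse demand $p:[0,\infty)\to[0,\infty)$, supplier $n$ has cost $C_n:[0,\infty)\to[0,\infty)$ and chooses $x_n\ge0$; $X=\sum_n x_n$. $C_n'(0)$ is the right derivative at $0$. Assumption 1: each $C_n$ is convex, continuous, nondecreasing on $[0,\infty)$, continuously differentiable on $(0,\infty)$, with $C_n(0)=0$. Assumption 2: $p$ is continuous, nonnegative, nonincreasing, $p(0)>0$; its right derivative at $0$ exists and at every $q>0$ its left and right derivatives exist. Assumption 3: there exists $R>0$ such that $p(R)\le\min_n C_n'(0)$. Assumption 4: $p(0)>\min_n C_n'(0)$. A monopoly output is an optimal solution $\mathbf{x}^P$ of $\max_{\mathbf{x}\ge0}\ p\!\left(\sum_n x_n\right)\sum_n x_n-\sum_n C_n(x_n)$ (maximum total profit of all suppliers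 colluding). Social welfare of $\mathbf{x}\ge0$: $W(\mathbf{x})=\int_0^X p(q)\,dq-\sum_{n=1}^N C_n(x_n)$; a social optimum $\mathbf{x}^S$ maximizes $W$. Efficiency: $\gamma(\mathbf{x})=W(\mathbf{x})/W(\mathbf{x}^S)$. *)

theory Defs
  imports "HOL-Analysis.Analysis"
begin

text \<open>Suppliers are indexed by n < N; an output profile is x :: nat => real,
  of which only the entries x 0, ..., x (N-1) matter.\<close>

definition total :: "nat \<Rightarrow> (nat \<Rightarrow> real) \<Rightarrow> real" where
  "total N x = (\<Sum>n<N. x n)"

definition nonneg_profile :: "nat \<Rightarrow> (nat \<Rightarrow> real) \<Rightarrow> bool" where
  "nonneg_profile N x \<longleftrightarrow> (\<forall>n<N. 0 \<le> x n)"

definition rderiv0 :: "(real \<Rightarrow> real) \<Rightarrow> real" where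
  "rderiv0 f = (THE d. (f has_real_derivative d) (at 0 within {0..}))"

definition cost_assm :: "(real \<Rightarrow> real) \<Rightarrow> bool" where
  "cost_assm C \<longleftrightarrow> convex_on {0..} C \<and> continuous_on {0..} C \<and> mono_on {0..} C
     \<and> C C1_differentiable_on {0<..} \<and> C 0 = 0"

definition price_assm :: "(real \<Rightarrow> real) \<Rightarrow> bool" where
  "price_assm p \<longleftrightarrow> continuous_on {0..} p \<and> (\<forall>q\<ge>0. 0 \<le> p q)
     \<and> antimono_on {0..} p \<and> 0 < p 0
     \<and> (\<exists>d. (p has_real_derivative d) (at 0 within {0..}))
     \<and> (\<forall>q>0. (\<exists>d. (p has_real_derivative d) (at q within {..q}))
              \<and> (\<exists>d. (p has_real_derivative d) (at q within {q..})))"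

text \<open>Assumptions 1--4 together.\<close>
definition cournot_assms :: "nat \<Rightarrow> (real \<Rightarrow> real) \<Rightarrow> (nat \<Rightarrow> real \<Rightarrow> real) \<Rightarrow> bool" where
  "cournot_assms N p C \<longleftrightarrow> 1 \<le> N
     \<and> (\<forall>n<N. cost_assm (C n))
     \<and> price_assm p
     \<and> (\<exists>R>0. \<forall>n<N. p R \<le> rderiv0 (C n))
     \<and> (\<exists>n<N. rderiv0 (C n) < p 0)"

definition total_profit :: "nat \<Rightarrow> (real \<Rightarrow> real) \<Rightarrow> (nat \<Rightarrow> real \<Rightarrow> real) \<Rightarrow> (nat \<Rightarrow> real) \<Rightarrow> real" where
  "total_profit N p C x = p (total N x) * total N x - (\<Sum>n<N. C n (x n))"

definition monopoly_output :: "nat \<Rightarrow> (real \<Rightarrow> real) \<Rightarrow> (nat \<Rightarrow> real \<Rightarrow> real) \<Rightarrow> (nat \<Rightarrow> real) \<Rightarrow> bool" where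
  "monopoly_output N p C x \<longleftrightarrow> nonneg_profile N x
     \<and> (\<forall>y. nonneg_profile N y \<longrightarrow> total_profit N p C y \<le> total_profit N p C x)"

definition welfare :: "nat \<Rightarrow> (real \<Rightarrow> real) \<Rightarrow> (nat \<Rightarrow> real \<Rightarrow> real) \<Rightarrow> (nat \<Rightarrow> real) \<Rightarrow> real" where
  "welfare N p C x = integral {0..total N x} p - (\<Sum>n<N. C n (x n))"

definition social_optimum :: "nat \<Rightarrow> (real \<Rightarrow> real) \<Rightarrow> (nat \<Rightarrow> real \<Rightarrow> real) \<Rightarrow> (nat \<Rightarrow> real) \<Rightarrow> bool" where
  "social_optimum N p C x \<longleftrightarrow> nonneg_profile N x
     \<and> (\<forall>y. nonneg_profile N y \<longrightarrow> welfare N p C y \<le> welfare N p C x)"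

definition efficiency :: "nat \<Rightarrow> (real \<Rightarrow> real) \<Rightarrow> (nat \<Rightarrow> real \<Rightarrow> real) \<Rightarrow> (nat \<Rightarrow> real) \<Rightarrow> (nat \<Rightarrow> real) \<Rightarrow> real" where
  "efficiency N p C xS x = welfare N p C x / welfare N p C xS"

definition cbar :: "(real \<Rightarrow> real) \<Rightarrow> real \<Rightarrow> real \<Rightarrow> real" where
  "cbar p XS XP = \<bar>deriv p XP\<bar> / \<bar>(p XS - p XP) / (XS - XP)\<bar>"

end

theory Submission
  imports Defs
begin

(* Let XP and XS be the total outputs of a monopoly output and of a social optimum.
   Part (a): if p XP = p XS, then p is constant between XP and XS, so passing from one
   output to the other changes welfare and profit by the same amount; the two optimality
   properties then force equal welfare.
   Part (b): if the prices differ, then XP < XS.  Convexity of p together with optimality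
   of the monopoly against moving a single supplier's output shows that p is
   differentiable at XP, and that the marginal revenue p XP + p'(XP) XP is a subgradient
   of every cost function at the monopoly output.  Bounding the area under p by its tangent
   at XP on [0, XP] and by its chord on [XP, XS] yields
      W(xP) >= 3/2 c XP^2   and   W(xS) - W(xP) <= c XP Delta - d Delta^2 / 2,
   with c = |p'(XP)|, d the chord slope and Delta = XS - XP, from which the bound
   3 / (3 + c/d) follows by completing a square.
   Part (c): truncated linear demand with zero costs attains the bound 3/4. *)

lemma slope_swap: "(a - b) / (c - d) = (b - a) / (d - (c::real))"
  by (metis minus_diff_eq minus_divide_divide)

lemma diff_quotient_at_right:
  fixes f :: "real \<Rightarrow> real"
  assumes "(f has_real_derivative D) (at x within {x..})"
  shows "((\<lambda>y. (f y - f x) / (y - x)) \<longlongrightarrow> D) (at_right x)"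
  using assms unfolding has_field_derivative_iff
  by (rule tendsto_mono[rotated]) (intro at_le, auto)

lemma diff_quotient_at_left:
  fixes f :: "real \<Rightarrow> real"
  assumes "(f has_real_derivative D) (at x within {..x})"
  shows "((\<lambda>y. (f y - f x) / (y - x)) \<longlongrightarrow> D) (at_left x)"
  using assms unfolding has_field_derivative_iff
  by (rule tendsto_mono[rotated]) (intro at_le, auto)

(* This turns first-order optimality of the monopoly into cost inequalities. *)
lemma tangent_below_convex_majorant:
  fixes f g :: "real \<Rightarrow> real"
  assumes S: "convex S" and g: "convex_on S g" and x: "x \<in> S" and y: "y \<in> S"
    and f: "(f has_real_derivative D) (at x)"
    and touch: "\<And>z. z \<in> S \<Longrightarrow> f z - f x \<le> g z - g x"
  shows "D * (y - x) \<le> g y - g x"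
proof -
  define h where "h t = f (x + t * (y - x))" for t
  have "(f has_real_derivative D) (at (x + 0 * (y - x)))" using f by simp
  moreover have "((\<lambda>t. x + t * (y - x)) has_real_derivative (y - x)) (at 0)"
    by (auto intro!: derivative_eq_intros)
  ultimately have "(h has_real_derivative D * (y - x)) (at 0)"
    unfolding h_def by (rule DERIV_chain2)
  then have lim: "((\<lambda>t. (h t - h 0) / (t - 0)) \<longlongrightarrow> D * (y - x)) (at_right 0)"
    by (rule diff_quotient_at_right[OF has_field_derivative_at_within])
  have "(h t - h 0) / (t - 0) \<le> g y - g x" if t: "t \<in> {0<..<1}" for t
  proof -
    define z where "z = (1 - t) *\<^sub>R x + t *\<^sub>R y"
    have z: "z \<in> S" "x + t * (y - x) = z"
      using t convexD[OF S x y, of "1 - t" t] by (auto simp: z_def algebra_simps)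
    have "g z \<le> (1 - t) * g x + t * g y"
      using t convex_onD[OF g, of t x y] x y by (simp add: z_def)
    then have "h t - h 0 \<le> t * (g y - g x)"
      using touch[OF z(1)] z(2) by (simp add: h_def algebra_simps)
    then show ?thesis using t by (simp add: pos_divide_le_eq mult.commute)
  qed
  then have "\<forall>\<^sub>F t in at_right 0. (h t - h 0) / (t - 0) \<le> g y - g x"
    using eventually_at_right_real[of 0 1] by (auto elim: eventually_mono)
  then show ?thesis
    using tendsto_upperbound[OF lim] trivial_limit_at_right_real by blast
qed

lemma convex_above_tangent:
  fixes f :: "real \<Rightarrow> real"
  assumes "convex S" "convex_on S f" "x \<in> S" "y \<in> S"
    and "(f has_real_derivative D) (at x)"
  shows "f x + D * (y - x) \<le> f y"
  using tangent_below_convex_majorant[OF assms] by simp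

lemma right_deriv_le_left_deriv_under_majorant:
  fixes f g :: "real \<Rightarrow> real"
  assumes fl: "(f has_real_derivative Dl) (at x within {..x})"
    and fr: "(f has_real_derivative Dr) (at x within {x..})"
    and g: "(g has_real_derivative G) (at x)"
    and touch: "\<forall>\<^sub>F z in at x. f z - f x \<le> g z - g x"
  shows "Dr \<le> Dl"
proof -
  have gr: "((\<lambda>z. (g z - g x) / (z - x)) \<longlongrightarrow> G) (at_right x)"
    and gl: "((\<lambda>z. (g z - g x) / (z - x)) \<longlongrightarrow> G) (at_left x)"
    using g by (auto intro: diff_quotient_at_right diff_quotient_at_left has_field_derivative_at_within)
  have "\<forall>\<^sub>F z in at_right x. f z - f x \<le> g z - g x"
    using touch by (rule filter_leD[rotated]) (intro at_le, simp)
  then have "\<forall>\<^sub>F z in at_right x. (f z - f x) / (z - x) \<le> (g z - g x) / (z - x)"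
    using eventually_at_right_less[of x]
    by eventually_elim (auto intro: divide_right_mono)
  then have "Dr \<le> G"
    by (rule tendsto_le[OF trivial_limit_at_right_real gr diff_quotient_at_right[OF fr]])
  have "\<forall>\<^sub>F z in at_left x. f z - f x \<le> g z - g x"
    using touch by (rule filter_leD[rotated]) (intro at_le, simp)
  moreover have "\<forall>\<^sub>F z in at_left x. z < x"
    by (simp add: eventually_at_filter)
  ultimately have "\<forall>\<^sub>F z in at_left x. (g z - g x) / (z - x) \<le> (f z - f x) / (z - x)"
    by eventually_elim (auto intro: divide_right_mono_neg)
  then have "G \<le> Dl"
    by (rule tendsto_le[OF trivial_limit_at_left_real diff_quotient_at_left[OF fl] gl])
  with \<open>Dr \<le> G\<close> show ?thesis by simp
qed

lemma convex_left_deriv_le_right_deriv: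
  fixes f :: "real \<Rightarrow> real"
  assumes conv: "convex_on S f" and x: "x \<in> interior S"
    and fl: "(f has_real_derivative Dl) (at x within {..x})"
    and fr: "(f has_real_derivative Dr) (at x within {x..})"
  shows "Dl \<le> Dr"
proof -
  obtain e where e: "0 < e" "ball x e \<subseteq> S" using x by (auto simp: mem_interior)
  define Q where "Q y = (f y - f x) / (y - x)" for y
  have slope: "Q s \<le> Q t" if "s \<in> {x - e<..<x}" "t \<in> {x<..<x + e}" for s t
  proof -
    have st: "s \<in> S" "t \<in> S" "s < x" "x < t"
      using that e(2) by (auto simp: dist_real_def subset_iff)
    have "(f s - f x) / (s - x) \<le> (f s - f t) / (s - t)"
      using convex_on_slope_le(1)[OF conv st(1,2), of x] st by simp
    also have "\<dots> \<le> (f x - f t) / (x - t)"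
      using convex_on_slope_le(2)[OF conv st(1,2), of x] st by simp
    finally show ?thesis by (simp add: Q_def slope_swap[of "f x"])
  qed
  have QL: "(Q \<longlongrightarrow> Dl) (at_left x)"
    using diff_quotient_at_left[OF fl] unfolding Q_def .
  have QR: "(Q \<longlongrightarrow> Dr) (at_right x)"
    using diff_quotient_at_right[OF fr] unfolding Q_def .
  have Dl_le: "Dl \<le> Q t" if t: "t \<in> {x<..<x + e}" for t
  proof (rule tendsto_upperbound[OF QL _ trivial_limit_at_left_real])
    have "x - e < x" using e(1) by simp
    from eventually_at_left_real[OF this] show "\<forall>\<^sub>F s in at_left x. Q s \<le> Q t"
      by (rule eventually_mono) (rule slope[OF _ t])
  qed
  have "x < x + e" using e(1) by simp
  from eventually_at_right_real[OF this] have "\<forall>\<^sub>F t in at_right x. Dl \<le> Q t"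
    by (rule eventually_mono) (rule Dl_le)
  then show ?thesis
    by (rule tendsto_lowerbound[OF QR _ trivial_limit_at_right_real])
qed

lemma deriv_from_equal_one_sided_derivs:
  fixes f :: "real \<Rightarrow> real"
  assumes "(f has_real_derivative D) (at x within {..x})"
    and "(f has_real_derivative D) (at x within {x..})"
  shows "(f has_real_derivative D) (at x)"
proof -
  have "((\<lambda>y. (f y - f x) / (y - x)) \<longlongrightarrow> D) (at x within {..x} \<union> {x..})"
    using assms by (simp add: has_field_derivative_iff Lim_within_Un)
  moreover have "{..x} \<union> {x..} = UNIV" by auto
  ultimately show ?thesis by (simp add: has_field_derivative_iff)
qed

(* A convex nondecreasing function has a right derivative at the left end of its domain:
   the difference quotients from a decrease as the point approaches a and are bounded by 0. *)
lemma convex_mono_right_deriv_exists: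
  fixes f :: "real \<Rightarrow> real"
  assumes conv: "convex_on {a..} f" and mono: "mono_on {a..} f"
  shows "\<exists>d. (f has_real_derivative d) (at a within {a..})"
proof -
  define Q where "Q t = (f t - f a) / (t - a)" for t
  have "(Q \<longlongrightarrow> Inf (Q ` ({a<..} \<inter> {a<..}))) (at a within ({a<..} \<inter> {a<..}))"
  proof (rule Lim_right_bound)
    fix s t assume st: "s \<in> {a<..}" "t \<in> {a<..}" "a < s" "s \<le> t"
    show "Q s \<le> Q t"
    proof (cases "s = t")
      case False
      then have "(f a - f s) / (a - s) \<le> (f a - f t) / (a - t)"
        using convex_on_slope_le(1)[OF conv, of a t s] st by simp
      then show ?thesis by (simp add: Q_def slope_swap[of "f a"])
    qed simp
  next
    fix s assume "s \<in> {a<..}" "a < s"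
    then show "0 \<le> Q s" using mono_onD[OF mono, of a s] by (simp add: Q_def)
  qed
  moreover have "{a..} - {a} = {a<..} - {a}" by auto
  then have "at a within {a..} = at a within {a<..}"
    by (simp add: at_within_def)
  ultimately show ?thesis
    unfolding has_field_derivative_iff Q_def[abs_def] by auto
qed

lemma rderiv0_eq:
  assumes "(f has_real_derivative d) (at 0 within {0..})"
  shows "rderiv0 f = d"
  unfolding rderiv0_def
proof (rule the_equality)
  have "at_right (0::real) \<le> at 0 within {0..}"
    by (intro at_le) auto
  then have "at (0::real) within {0..} \<noteq> bot"
    using trivial_limit_at_right_real by (auto simp: bot_unique)
  then show "d' = d" if "(f has_real_derivative d') (at 0 within {0..})" for d'
    using that assms by (auto simp: has_field_derivative_iff intro: tendsto_unique)
qed (rule assms)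

lemma integral_affine:
  fixes a b u v :: real
  assumes "a \<le> b"
  shows "integral {a..b} (\<lambda>q. u + v * (q - a)) = u * (b - a) + v * (b - a)^2 / 2"
proof -
  define H where "H q = u * q + v * (q - a)^2 / 2" for q
  have "((\<lambda>q. u + v * (q - a)) has_integral (H b - H a)) {a..b}"
  proof (rule fundamental_theorem_of_calculus[OF assms])
    fix x :: real assume "x \<in> {a..b}"
    have "(H has_real_derivative (u + v * (x - a))) (at x within {a..b})"
      unfolding H_def by (auto intro!: derivative_eq_intros simp: power2_eq_square field_simps)
    then show "(H has_vector_derivative (u + v * (x - a))) (at x within {a..b})"
      by (simp add: has_real_derivative_iff_has_vector_derivative)
  qed
  then show ?thesis by (simp add: integral_unique H_def algebra_simps)
qed

lemma convex_integral_le_trapezoid: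
  fixes f :: "real \<Rightarrow> real"
  assumes conv: "convex_on {a..b} f" and int: "f integrable_on {a..b}" and ab: "a < b"
  shows "integral {a..b} f \<le> (b - a) * (f a + f b) / 2"
proof -
  define v where "v = (f b - f a) / (b - a)"
  have "integral {a..b} f \<le> integral {a..b} (\<lambda>q. f a + v * (q - a))"
  proof (rule integral_le[OF int])
    show "(\<lambda>q. f a + v * (q - a)) integrable_on {a..b}"
      by (intro integrable_continuous_interval continuous_intros)
    show "f q \<le> f a + v * (q - a)" if "q \<in> {a..b}" for q
      using convex_onD_Icc'[OF conv that] by (simp add: v_def algebra_simps)
  qed
  also have "\<dots> = f a * (b - a) + v * (b - a)^2 / 2"
    using ab by (intro integral_affine) simp
  also have "\<dots> = (b - a) * (f a + f b) / 2"
    using ab by (simp add: v_def power2_eq_square field_simps)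
  finally show ?thesis .
qed

lemma integral_ge_tangent_at_right_end:
  fixes f :: "real \<Rightarrow> real"
  assumes int: "f integrable_on {a..b}" and ab: "a \<le> b"
    and tangent: "\<And>q. q \<in> {a..b} \<Longrightarrow> f b + D * (q - b) \<le> f q"
  shows "(b - a) * f b - D * (b - a)^2 / 2 \<le> integral {a..b} f"
proof -
  have "integral {a..b} (\<lambda>q. (f b - D * (b - a)) + D * (q - a)) \<le> integral {a..b} f"
  proof (rule integral_le[OF _ int])
    show "(\<lambda>q. (f b - D * (b - a)) + D * (q - a)) integrable_on {a..b}"
      by (intro integrable_continuous_interval continuous_intros)
    show "(f b - D * (b - a)) + D * (q - a) \<le> f q" if "q \<in> {a..b}" for q
      using tangent[OF that] by (simp add: algebra_simps)
  qed
  moreover have "(f b - D * (b - a)) * (b - a) + D * (b - a)^2 / 2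
      = (b - a) * f b - D * (b - a)^2 / 2"
    by (simp add: power2_eq_square algebra_simps)
  ultimately show ?thesis by (simp only: integral_affine[OF ab])
qed

definition revenue :: "(real \<Rightarrow> real) \<Rightarrow> real \<Rightarrow> real" where
  "revenue p q = p q * q"

lemma price_antimono:
  assumes "price_assm p" "0 \<le> a" "a \<le> b"
  shows "p b \<le> p a"
  using assms monotone_onD[of "{0..}" "(\<le>)" "\<lambda>x y. y \<le> x" p a b]
  by (simp add: price_assm_def)

lemma price_integrable:
  assumes "price_assm p" "0 \<le> a"
  shows "p integrable_on {a..b}"
proof -
  have "continuous_on {a..b} p"
    using assms by (auto simp: price_assm_def intro: continuous_on_subset)
  then show ?thesis by (rule integrable_continuous_interval)
qed

lemma price_integral_split:
  assumes "price_assm p" "0 \<le> m" "m \<le> X"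
  shows "integral {0..X} p = integral {0..m} p + integral {m..X} p"
  using Henstock_Kurzweil_Integration.integral_combine[where a=0 and c=m and b=X and f=p]
    price_integrable[OF assms(1), of 0 X] assms
  by simp

lemma price_integral_ge_rectangle:
  assumes pa: "price_assm p" and "0 \<le> a" "a \<le> b"
  shows "p b * (b - a) \<le> integral {a..b} p"
proof -
  have "integral {a..b} (\<lambda>_. p b) \<le> integral {a..b} p"
    using assms by (intro integral_le price_integrable[OF pa]) (auto intro: price_antimono[OF pa])
  then show ?thesis using assms by (simp add: mult.commute)
qed

lemma price_integral_flat_tail:
  assumes pa: "price_assm p" and m: "0 \<le> m" "m \<le> X" and flat: "p m = p X"
  shows "integral {0..X} p = integral {0..m} p + p X * (X - m)"
proof -
  have "integral {m..X} p = integral {m..X} (\<lambda>_. p X)"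
  proof (rule integral_cong)
    fix q assume q: "q \<in> {m..X}"
    then have "p X \<le> p q" "p q \<le> p m"
      using m by (auto intro!: price_antimono[OF pa])
    then show "p q = p X" using flat by simp
  qed
  then show ?thesis using price_integral_split[OF pa m] m by simp
qed

lemma cost_nonneg:
  assumes "cost_assm C" "0 \<le> x"
  shows "0 \<le> C x"
  using assms mono_onD[of "{0..}" C 0 x] by (auto simp: cost_assm_def)

lemma cost_has_rderiv0:
  assumes "cost_assm C"
  shows "(C has_real_derivative rderiv0 C) (at 0 within {0..})"
proof -
  obtain d where "(C has_real_derivative d) (at 0 within {0..})"
    using convex_mono_right_deriv_exists[of 0 C] assms by (auto simp: cost_assm_def)
  then show ?thesis using rderiv0_eq by metis
qed

lemma total_nonneg: "nonneg_profile N x \<Longrightarrow> 0 \<le> total N x"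
  unfolding nonneg_profile_def total_def by (auto intro!: sum_nonneg)

lemma total_costs_nonneg:
  assumes "\<forall>n<N. cost_assm (C n)" "nonneg_profile N x"
  shows "0 \<le> (\<Sum>n<N. C n (x n))"
proof (rule sum_nonneg)
  fix n assume "n \<in> {..<N}"
  then show "0 \<le> C n (x n)"
    using assms cost_nonneg[of "C n" "x n"] by (simp add: nonneg_profile_def)
qed

(* Profit never exceeds welfare: the revenue p X * X is below the area under p on [0, X]. *)
lemma profit_le_welfare:
  assumes "price_assm p" "nonneg_profile N x"
  shows "total_profit N p C x \<le> welfare N p C x"
  using price_integral_ge_rectangle[OF assms(1) order_refl total_nonneg[OF assms(2)]]
  by (simp add: total_profit_def welfare_def)

lemma sum_update_component:
  fixes g :: "nat \<Rightarrow> real \<Rightarrow> real"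
  assumes "n < N"
  shows "(\<Sum>k<N. g k ((x(n := v)) k)) = (\<Sum>k<N. g k (x k)) - g n (x n) + g n v"
proof -
  have n: "n \<in> {..<N}" using assms by simp
  have "(\<Sum>k\<in>{..<N} - {n}. g k ((x(n := v)) k)) = (\<Sum>k\<in>{..<N} - {n}. g k (x k))"
    by (rule sum.cong) auto
  then show ?thesis
    using sum.remove[OF _ n, of "\<lambda>k. g k ((x(n := v)) k)"] sum.remove[OF _ n, of "\<lambda>k. g k (x k)"]
    by simp
qed

lemma monopoly_unilateral_deviation:
  assumes mon: "monopoly_output N p C x" and n: "n < N" and nn: "0 \<le> x n + t"
  shows "revenue p (total N x + t) - revenue p (total N x) \<le> C n (x n + t) - C n (x n)"
proof -
  let ?y = "x(n := x n + t)"
  have "nonneg_profile N ?y"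
    using mon nn by (auto simp: monopoly_output_def nonneg_profile_def)
  then have "total_profit N p C ?y \<le> total_profit N p C x"
    using mon by (auto simp: monopoly_output_def)
  moreover have "total N ?y = total N x + t"
    using sum_update_component[of n N "\<lambda>k z. z" x] n by (simp add: total_def)
  moreover have "(\<Sum>k<N. C k (?y k)) = (\<Sum>k<N. C k (x k)) - C n (x n) + C n (x n + t)"
    using sum_update_component[of n N C x] n by simp
  ultimately show ?thesis by (simp add: total_profit_def revenue_def)
qed

(* Assumption 4 yields a profitable profile: since p 0 exceeds C n0'(0), a small output y
   of supplier n0 alone has p y > C n0 y / y. *)
lemma positive_profit_exists:
  assumes model: "cournot_assms N p C"
  shows "\<exists>e. nonneg_profile N e \<and> 0 < total_profit N p C e"
proof -
  obtain n0 where n0: "n0 < N" "rderiv0 (C n0) < p 0"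
    using model by (auto simp: cournot_assms_def)
  have costs: "\<forall>n<N. cost_assm (C n)" and pa: "price_assm p"
    using model by (auto simp: cournot_assms_def)
  let ?r = "rderiv0 (C n0)"
  have "((\<lambda>y. (C n0 y - C n0 0) / (y - 0)) \<longlongrightarrow> ?r) (at_right 0)"
    using cost_has_rderiv0 costs n0(1) by (intro diff_quotient_at_right) simp
  then have avg_cost: "((\<lambda>y. C n0 y / y) \<longlongrightarrow> ?r) (at_right 0)"
    using costs n0(1) by (simp add: cost_assm_def)
  have "(p \<longlongrightarrow> p 0) (at 0 within {0..})"
    using pa by (simp add: price_assm_def continuous_on_def)
  then have price: "(p \<longlongrightarrow> p 0) (at_right 0)"
    by (rule tendsto_mono[rotated]) (intro at_le, auto)
  have "\<forall>\<^sub>F y in at_right 0. 0 < p y - C n0 y / y"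
    using n0(2) by (intro order_tendstoD(1)[OF tendsto_diff[OF price avg_cost]]) simp
  then have "\<forall>\<^sub>F y in at_right 0. 0 < y \<and> 0 < p y - C n0 y / y"
    using eventually_at_right_less[of "0::real"] by eventually_elim auto
  then obtain y :: real where y: "0 < y" "0 < p y - C n0 y / y"
    using eventually_happens' trivial_limit_at_right_real by blast
  define e where "e = (\<lambda>k. if k = n0 then y else 0)"
  have tot: "total N e = y" using n0 by (simp add: total_def e_def)
  have "(\<Sum>k<N. C k (e k)) = (\<Sum>k<N. if k = n0 then C n0 y else 0)"
    using costs by (intro sum.cong) (auto simp: e_def cost_assm_def)
  then have "(\<Sum>k<N. C k (e k)) = C n0 y" using n0 by simp
  moreover have "0 < p y * y - C n0 y"
    using y mult_pos_pos[OF y] by (simp add: field_simps)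
  ultimately have "0 < total_profit N p C e" by (simp add: total_profit_def tot)
  moreover have "nonneg_profile N e" using y by (auto simp: nonneg_profile_def e_def)
  ultimately show ?thesis by blast
qed

(* The monopoly output is positive, because some profile has positive profit. *)
lemma monopoly_total_pos:
  assumes model: "cournot_assms N p C" and mon: "monopoly_output N p C xP"
  shows "0 < total N xP"
proof (rule ccontr)
  assume "\<not> 0 < total N xP"
  then have zero: "total N xP = 0"
    using mon total_nonneg by (force simp: monopoly_output_def)
  obtain e where e: "nonneg_profile N e" "0 < total_profit N p C e"
    using positive_profit_exists[OF model] by blast
  have "total_profit N p C e \<le> total_profit N p C xP"
    using mon e by (auto simp: monopoly_output_def)
  moreover have "0 \<le> (\<Sum>n<N. C n (xP n))"
    using model mon by (intro total_costs_nonneg) (auto simp: cournot_assms_def monopoly_output_def)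
  ultimately show False using e zero by (simp add: total_profit_def)
qed

lemma social_optimum_pos:
  assumes model: "cournot_assms N p C" and soc: "social_optimum N p C xS"
  shows "0 < welfare N p C xS" "0 < total N xS"
proof -
  obtain e where e: "nonneg_profile N e" "0 < total_profit N p C e"
    using positive_profit_exists[OF model] by blast
  moreover have "total_profit N p C e \<le> welfare N p C e"
    using model e(1) by (intro profit_le_welfare) (simp add: cournot_assms_def)
  moreover have "welfare N p C e \<le> welfare N p C xS"
    using soc e by (auto simp: social_optimum_def)
  ultimately show W: "0 < welfare N p C xS" by simp
  show "0 < total N xS"
  proof (rule ccontr)
    assume "\<not> 0 < total N xS"
    then have "total N xS = 0"
      using soc total_nonneg by (force simp: social_optimum_def)
    moreover have "0 \<le> (\<Sum>n<N. C n (xS n))"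
      using model soc by (intro total_costs_nonneg) (auto simp: cournot_assms_def social_optimum_def)
    ultimately show False using W by (simp add: welfare_def)
  qed
qed

(* Part (a): if the prices at the two optima agree, p is flat between the two totals, so
   welfare and profit differ by the same amount at both, and monopoly output is efficient. *)
lemma efficiency_one_if_equal_prices:
  assumes model: "cournot_assms N p C" and soc: "social_optimum N p C xS"
    and mon: "monopoly_output N p C xP" and eq: "p (total N xP) = p (total N xS)"
  shows "efficiency N p C xS xP = 1"
proof -
  have pa: "price_assm p" using model by (simp add: cournot_assms_def)
  define XP XS where "XP = total N xP" and "XS = total N xS"
  define m where "m = min XP XS"
  have XP0: "0 \<le> XP" and XS0: "0 \<le> XS"
    using mon soc total_nonneg by (auto simp: monopoly_output_def social_optimum_def XP_def XS_def)
  have m: "0 \<le> m" "m \<le> XP" "m \<le> XS"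
    using XP0 XS0 by (auto simp: m_def)
  have flat: "p m = p XP" "p m = p XS"
    using eq by (auto simp: m_def min_def XP_def XS_def)
  have "integral {0..XP} p = integral {0..m} p + p XP * (XP - m)"
    by (rule price_integral_flat_tail[OF pa m(1,2) flat(1)])
  moreover have "integral {0..XS} p = integral {0..m} p + p XS * (XS - m)"
    by (rule price_integral_flat_tail[OF pa m(1,3) flat(2)])
  moreover have "total_profit N p C xS \<le> total_profit N p C xP"
    using mon soc by (auto simp: monopoly_output_def social_optimum_def)
  ultimately have "welfare N p C xS \<le> welfare N p C xP"
    using eq unfolding welfare_def total_profit_def XP_def XS_def by (simp add: algebra_simps)
  moreover have "welfare N p C xP \<le> welfare N p C xS"
    using mon soc by (auto simp: monopoly_output_def social_optimum_def)
  ultimately show ?thesis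
    using social_optimum_pos(1)[OF model soc] by (simp add: efficiency_def)
qed

(* If the prices at the two optima differ, the monopoly supplies strictly less than the
   social optimum: otherwise the area under p on [XS, XP] is at least p XP (XP - XS), and
   the two optimality conditions together force p XS <= p XP, hence equal prices. *)
lemma monopoly_total_lt_social:
  assumes model: "cournot_assms N p C" and soc: "social_optimum N p C xS"
    and mon: "monopoly_output N p C xP" and ne: "p (total N xP) \<noteq> p (total N xS)"
  shows "total N xP < total N xS"
proof (rule ccontr)
  have pa: "price_assm p" using model by (simp add: cournot_assms_def)
  define XP XS where "XP = total N xP" and "XS = total N xS"
  assume "\<not> total N xP < total N xS"
  then have le: "XS \<le> XP" by (simp add: XP_def XS_def)
  have XS0: "0 < XS" using social_optimum_pos(2)[OF model soc] by (simp add: XS_def)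
  have "integral {0..XP} p = integral {0..XS} p + integral {XS..XP} p"
    using price_integral_split[OF pa, of XS XP] XS0 le by simp
  moreover have "p XP * (XP - XS) \<le> integral {XS..XP} p"
    using price_integral_ge_rectangle[OF pa, of XS XP] XS0 le by simp
  moreover have "welfare N p C xP \<le> welfare N p C xS"
    and "total_profit N p C xS \<le> total_profit N p C xP"
    using mon soc by (auto simp: monopoly_output_def social_optimum_def)
  ultimately have "p XS * XS \<le> p XP * XS"
    unfolding welfare_def total_profit_def XP_def[symmetric] XS_def[symmetric]
    by (simp add: algebra_simps)
  then have "p XS \<le> p XP" using XS0 by simp
  moreover have "p XP \<le> p XS" using price_antimono[OF pa, of XS XP] XS0 le by simp
  ultimately show False using ne by (simp add: XP_def XS_def)
qed

lemma active_supplier_exists: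
  assumes "0 < total N x"
  shows "\<exists>n<N. 0 < x n"
proof (rule ccontr)
  assume "\<not> (\<exists>n<N. 0 < x n)"
  then have "total N x \<le> 0" unfolding total_def by (intro sum_nonpos) auto
  with assms show False by simp
qed

lemma revenue_deriv_within:
  assumes "(p has_real_derivative D) (at X within S)"
  shows "(revenue p has_real_derivative D * X + p X) (at X within S)"
  unfolding revenue_def[abs_def] using assms
  by (auto intro!: derivative_eq_intros)

(* Convexity gives left
   derivative <= right derivative; a supplier with positive output can move the total both
   ways, and optimality against such moves gives the reverse inequality. *)
lemma monopoly_price_differentiable:
  assumes model: "cournot_assms N p C" and pconv: "convex_on {0..} p"
    and mon: "monopoly_output N p C xP"
  shows "\<exists>D. (p has_real_derivative D) (at (total N xP))"
proof -
  define X where "X = total N xP"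
  have X: "0 < X" using monopoly_total_pos[OF model mon] by (simp add: X_def)
  have pa: "price_assm p" and costs: "\<forall>n<N. cost_assm (C n)"
    using model by (auto simp: cournot_assms_def)
  obtain a where a: "(p has_real_derivative a) (at X within {..X})"
    using pa X unfolding price_assm_def by blast
  obtain b where b: "(p has_real_derivative b) (at X within {X..})"
    using pa X unfolding price_assm_def by blast
  have "a \<le> b"
    using convex_left_deriv_le_right_deriv[OF pconv _ a b] X by simp
  obtain n where n: "n < N" "0 < xP n"
    using active_supplier_exists X unfolding X_def by blast
  define x where "x = xP n"
  obtain G where G: "(C n has_real_derivative G) (at x)"
    using costs n unfolding cost_assm_def C1_differentiable_on_eq x_def
    by (auto simp: real_differentiable_def)
  define g where "g y = C n (x + (y - X))" for y
  have "(g has_real_derivative G) (at X)"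
  proof -
    have "(C n has_real_derivative G) (at (x + (X - X)))" using G by simp
    moreover have "((\<lambda>y. x + (y - X)) has_real_derivative 1) (at X)"
      by (auto intro!: derivative_eq_intros)
    ultimately show ?thesis unfolding g_def using DERIV_chain2 by fastforce
  qed
  moreover have "\<forall>\<^sub>F y in at X. revenue p y - revenue p X \<le> g y - g X"
  proof -
    have "revenue p y - revenue p X \<le> g y - g X" if "dist y X < x" for y
      using monopoly_unilateral_deviation[OF mon n(1), of "y - X"] that
      by (simp add: g_def X_def x_def dist_real_def abs_less_iff)
    then show ?thesis using n(2) by (auto simp: eventually_at x_def)
  qed
  ultimately have "b * X + p X \<le> a * X + p X"
    by (rule right_deriv_le_left_deriv_under_majorant[OF revenue_deriv_within[OF a]
          revenue_deriv_within[OF b]])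
  then have "a = b" using X \<open>a \<le> b\<close> by simp
  then show ?thesis
    using deriv_from_equal_one_sided_derivs a b by (auto simp: X_def)
qed

lemma monopoly_cost_subgradient:
  assumes model: "cournot_assms N p C" and mon: "monopoly_output N p C xP"
    and pd: "(p has_real_derivative D) (at (total N xP))" and n: "n < N" and y: "0 \<le> y"
  shows "(p (total N xP) + D * total N xP) * (y - xP n) \<le> C n y - C n (xP n)"
proof -
  define X x where "X = total N xP" and "x = xP n"
  define f where "f z = revenue p (X + (z - x))" for z
  have "(revenue p has_real_derivative D * X + p X) (at (X + (x - x)))"
    using revenue_deriv_within[of p D X UNIV] pd by (simp add: X_def)
  moreover have "((\<lambda>z. X + (z - x)) has_real_derivative 1) (at x)"
    by (auto intro!: derivative_eq_intros)
  ultimately have "(f has_real_derivative p X + D * X) (at x)"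
    unfolding f_def using DERIV_chain2 by (fastforce simp: add.commute)
  moreover have "f z - f x \<le> C n z - C n x" if "z \<in> {0..}" for z
    using monopoly_unilateral_deviation[OF mon n, of "z - x"] that
    by (simp add: f_def X_def x_def)
  moreover have "convex_on {0..} (C n)" and "x \<in> {0..}"
    using model mon n by (auto simp: cournot_assms_def cost_assm_def monopoly_output_def
        nonneg_profile_def x_def)
  ultimately show ?thesis
    using tangent_below_convex_majorant[of "{0..}" "C n" x y f] y by (simp add: X_def x_def)
qed

lemma monopoly_total_cost_subgradient:
  assumes model: "cournot_assms N p C" and mon: "monopoly_output N p C xP"
    and pd: "(p has_real_derivative D) (at (total N xP))" and y: "nonneg_profile N y"
  shows "(p (total N xP) + D * total N xP) * (total N y - total N xP)
     \<le> (\<Sum>n<N. C n (y n)) - (\<Sum>n<N. C n (xP n))"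
proof -
  have "(p (total N xP) + D * total N xP) * (total N y - total N xP)
      = (\<Sum>n<N. (p (total N xP) + D * total N xP) * (y n - xP n))"
    by (simp only: total_def sum_distrib_left[symmetric] sum_subtractf[symmetric])
  also have "\<dots> \<le> (\<Sum>n<N. C n (y n) - C n (xP n))"
    using y by (intro sum_mono monopoly_cost_subgradient[OF model mon pd])
      (auto simp: nonneg_profile_def)
  also have "\<dots> = (\<Sum>n<N. C n (y n)) - (\<Sum>n<N. C n (xP n))"
    by (simp add: sum_subtractf)
  finally show ?thesis .
qed

lemma price_deriv_nonpos:
  assumes pa: "price_assm p" and pd: "(p has_real_derivative D) (at X)" and X: "0 \<le> X"
  shows "D \<le> 0"
proof (rule tendsto_upperbound[OF diff_quotient_at_right[OF has_field_derivative_at_within[OF pd]]])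
  show "\<forall>\<^sub>F z in at_right X. (p z - p X) / (z - X) \<le> 0"
    using eventually_at_right_less[of X]
    by eventually_elim (use price_antimono[OF pa X] in \<open>auto intro: divide_nonpos_pos\<close>)
qed simp

(* Lower bound on monopoly welfare: the tangent of p at X bounds the consumer area from
   below and the subgradient inequality at zero output bounds the costs from above. *)
lemma monopoly_welfare_lower_bound:
  assumes model: "cournot_assms N p C" and pconv: "convex_on {0..} p"
    and mon: "monopoly_output N p C xP" and pd: "(p has_real_derivative D) (at (total N xP))"
  shows "3 / 2 * (- D) * (total N xP)^2 \<le> welfare N p C xP"
proof -
  define X where "X = total N xP"
  have X: "0 < X" using monopoly_total_pos[OF model mon] by (simp add: X_def)
  have pa: "price_assm p" using model by (simp add: cournot_assms_def)
  have "X * p X - D * X^2 / 2 \<le> integral {0..X} p"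
    using integral_ge_tangent_at_right_end[OF price_integrable[OF pa order_refl], of X D]
      convex_above_tangent[OF _ pconv _ _ pd[folded X_def]] X by simp
  moreover have "(p X + D * X) * (0 - X) \<le> 0 - (\<Sum>n<N. C n (xP n))"
    using monopoly_total_cost_subgradient[OF model mon pd, of "\<lambda>_. 0"] model
    by (simp add: X_def total_def nonneg_profile_def cournot_assms_def cost_assm_def)
  ultimately show ?thesis
    by (simp add: welfare_def X_def[symmetric] power2_eq_square algebra_simps)
qed

(* Upper bound on the welfare lost by the monopoly: the chord of p bounds the extra area
   and the subgradient inequality bounds the cost savings. *)
lemma welfare_loss_upper_bound:
  assumes model: "cournot_assms N p C" and pconv: "convex_on {0..} p"
    and soc: "social_optimum N p C xS" and mon: "monopoly_output N p C xP"
    and pd: "(p has_real_derivative D) (at (total N xP))"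
    and lt: "total N xP < total N xS"
  defines "\<Delta> \<equiv> total N xS - total N xP"
  shows "welfare N p C xS - welfare N p C xP
    \<le> (- D) * total N xP * \<Delta> - (p (total N xP) - p (total N xS)) / \<Delta> * \<Delta>^2 / 2"
proof -
  define XP XS where "XP = total N xP" and "XS = total N xS"
  have XP: "0 < XP" using monopoly_total_pos[OF model mon] by (simp add: XP_def)
  have pa: "price_assm p" using model by (simp add: cournot_assms_def)
  have "integral {0..XS} p = integral {0..XP} p + integral {XP..XS} p"
    using price_integral_split[OF pa, of XP XS] XP lt by (simp add: XP_def XS_def)
  moreover have "integral {XP..XS} p \<le> (XS - XP) * (p XP + p XS) / 2"
    using XP lt by (intro convex_integral_le_trapezoid price_integrable[OF pa]
        convex_on_subset[OF pconv]) (auto simp: XP_def XS_def)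
  moreover have "(p XP + D * XP) * (XS - XP)
      \<le> (\<Sum>n<N. C n (xS n)) - (\<Sum>n<N. C n (xP n))"
    using monopoly_total_cost_subgradient[OF model mon pd] soc
    by (simp add: social_optimum_def XP_def XS_def)
  ultimately have "welfare N p C xS - welfare N p C xP
      \<le> (XS - XP) * (p XP + p XS) / 2 - (p XP + D * XP) * (XS - XP)"
    unfolding welfare_def XP_def[symmetric] XS_def[symmetric] by linarith
  also have "\<dots> = (- D) * XP * \<Delta> - (p XP - p XS) / \<Delta> * \<Delta>^2 / 2"
    using lt by (simp add: \<Delta>_def XP_def XS_def power2_eq_square field_simps)
  finally show ?thesis by (simp add: XP_def XS_def)
qed

(* The algebraic core of part (b): the two welfare bounds combine to the efficiency bound
   3 / (3 + c / d), using (c X - d Delta)^2 >= 0. *)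
lemma efficiency_bound_from_welfare_bounds:
  fixes c d X \<Delta> WP WS :: real
  assumes d: "0 < d" "d \<le> c" and WS: "0 < WS"
    and loss: "WS - WP \<le> c * X * \<Delta> - d * \<Delta>^2 / 2"
    and gain: "3 / 2 * c * X^2 \<le> WP"
  shows "3 / (3 + c / d) \<le> WP / WS"
proof -
  have "d * (3 * (c * X * \<Delta> - d * \<Delta>^2 / 2)) \<le> d * (c / d * (3 / 2 * c * X^2))"
    using d(1) sum_squares_ge_zero[of 0 "c * X - d * \<Delta>"]
    by (simp add: power2_eq_square algebra_simps)
  then have "3 * (c * X * \<Delta> - d * \<Delta>^2 / 2) \<le> c / d * (3 / 2 * c * X^2)"
    using d(1) by (rule mult_left_le_imp_le)
  also have "\<dots> \<le> c / d * WP"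
    using gain d by (intro mult_left_mono) auto
  finally have "3 * WS \<le> (3 + c / d) * WP"
    using loss by (simp add: algebra_simps)
  moreover have "0 < 3 + c / d" using d by (auto intro!: add_pos_pos)
  ultimately show ?thesis
    using WS by (simp add: divide_le_eq le_divide_eq mult.commute)
qed

(* Part (b), with c = |p'(XP)| and d the absolute slope of the chord of p between the two
   totals; the tangent at XP lies below that chord, which gives c >= d. *)
lemma efficiency_bound_if_distinct_prices:
  assumes model: "cournot_assms N p C" and pconv: "convex_on {0..} p"
    and soc: "social_optimum N p C xS" and mon: "monopoly_output N p C xP"
    and ne: "p (total N xP) \<noteq> p (total N xS)"
  shows "p differentiable (at (total N xP))
    \<and> 1 \<le> cbar p (total N xS) (total N xP)
    \<and> 3 / (3 + cbar p (total N xS) (total N xP)) \<le> efficiency N p C xS xP"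
proof -
  define XP XS where "XP = total N xP" and "XS = total N xS"
  have pa: "price_assm p" using model by (simp add: cournot_assms_def)
  have XP: "0 < XP" using monopoly_total_pos[OF model mon] by (simp add: XP_def)
  have lt: "XP < XS" using monopoly_total_lt_social[OF model soc mon ne] by (simp add: XP_def XS_def)
  obtain D where pd: "(p has_real_derivative D) (at XP)"
    using monopoly_price_differentiable[OF model pconv mon] by (auto simp: XP_def)
  define c d where "c = - D" and "d = (p XP - p XS) / (XS - XP)"
  have "p XS < p XP"
    using price_antimono[OF pa, of XP XS] XP lt ne by (simp add: XP_def XS_def)
  then have d_pos: "0 < d" using lt by (simp add: d_def)
  have "p XP + D * (XS - XP) \<le> p XS"
    using convex_above_tangent[OF _ pconv _ _ pd] XP lt by simp
  then have "d \<le> c" using lt by (simp add: c_def d_def field_simps)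
  have "\<bar>deriv p XP\<bar> = c"
    using DERIV_imp_deriv[OF pd] price_deriv_nonpos[OF pa pd] XP by (simp add: c_def)
  moreover have "(p XS - p XP) / (XS - XP) = - d"
    by (simp add: d_def diff_divide_distrib)
  ultimately have "cbar p XS XP = c / d"
    using d_pos by (simp add: cbar_def)
  moreover have "3 / (3 + c / d) \<le> efficiency N p C xS xP"
    unfolding efficiency_def
  proof (rule efficiency_bound_from_welfare_bounds[OF d_pos \<open>d \<le> c\<close>])
    show "0 < welfare N p C xS" using social_optimum_pos(1)[OF model soc] .
    show "welfare N p C xS - welfare N p C xP \<le> c * XP * (XS - XP) - d * (XS - XP)^2 / 2"
      using welfare_loss_upper_bound[OF model pconv soc mon] pd lt
      by (simp add: XP_def XS_def c_def d_def)
    show "3 / 2 * c * XP^2 \<le> welfare N p C xP"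
      using monopoly_welfare_lower_bound[OF model pconv mon] pd by (simp add: XP_def c_def)
  qed
  moreover have "p differentiable (at XP)" using pd real_differentiable_def by blast
  ultimately show ?thesis using d_pos \<open>d \<le> c\<close> by (simp add: XP_def XS_def)
qed

definition linear_demand :: "real \<Rightarrow> real" where
  "linear_demand q = max (1 - q) 0"

lemma linear_demand_deriv_slope:
  assumes "q \<in> S" "S \<subseteq> {..1} \<or> q < 1"
  shows "(linear_demand has_real_derivative -1) (at q within S)"
proof (rule has_field_derivative_transform_within)
  show "((\<lambda>x. 1 - x) has_real_derivative -1) (at q within S)"
    by (auto intro!: derivative_eq_intros)
  show "0 < (if q < 1 then 1 - q else 1)" by simp
  show "1 - x = linear_demand x" if "x \<in> S" "dist x q < (if q < 1 then 1 - q else 1)" for x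
    using that assms(2) by (auto simp: linear_demand_def dist_real_def split: if_splits)
qed (rule assms(1))

lemma linear_demand_deriv_flat:
  assumes "q \<in> S" "S \<subseteq> {1..} \<or> 1 < q"
  shows "(linear_demand has_real_derivative 0) (at q within S)"
proof (rule has_field_derivative_transform_within)
  show "((\<lambda>x. 0) has_real_derivative 0) (at q within S)"
    by (auto intro!: derivative_eq_intros)
  show "0 < (if 1 < q then q - 1 else 1)" by simp
  show "0 = linear_demand x" if "x \<in> S" "dist x q < (if 1 < q then q - 1 else 1)" for x
    using that assms(2) by (auto simp: linear_demand_def dist_real_def split: if_splits)
qed (rule assms(1))

lemma linear_demand_continuous: "continuous_on S linear_demand"
  unfolding linear_demand_def by (intro continuous_intros)

lemma linear_demand_price_assm: "price_assm linear_demand"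
  unfolding price_assm_def
proof (intro conjI allI impI)
  show "continuous_on {0..} linear_demand" by (rule linear_demand_continuous)
  show "antimono_on {0..} linear_demand"
    by (intro monotone_onI) (auto simp: linear_demand_def)
  show "\<exists>d. (linear_demand has_real_derivative d) (at 0 within {0..})"
    using linear_demand_deriv_slope[of 0 "{0..}"] by auto
  fix q :: real assume "0 < q"
  show "\<exists>d. (linear_demand has_real_derivative d) (at q within {..q})"
    using linear_demand_deriv_slope[of q "{..q}"] linear_demand_deriv_flat[of q "{..q}"]
    by (cases "q \<le> 1") auto
  show "\<exists>d. (linear_demand has_real_derivative d) (at q within {q..})"
    using linear_demand_deriv_slope[of q "{q..}"] linear_demand_deriv_flat[of q "{q..}"]
    by (cases "q < 1") auto
qed (auto simp: linear_demand_def)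

lemma linear_demand_convex: "convex_on {0..} linear_demand"
proof (rule convex_onI)
  fix t x y :: real assume t: "0 < t" "t < 1"
  have "1 - ((1 - t) * x + t * y) = (1 - t) * (1 - x) + t * (1 - y)"
    by (simp add: algebra_simps)
  moreover have "(1 - t) * (1 - x) \<le> (1 - t) * max (1 - x) 0" "t * (1 - y) \<le> t * max (1 - y) 0"
    using t by (intro mult_left_mono; simp)+
  moreover have "0 \<le> (1 - t) * max (1 - x) 0" "0 \<le> t * max (1 - y) 0"
    using t by auto
  ultimately show "linear_demand ((1 - t) *\<^sub>R x + t *\<^sub>R y)
      \<le> (1 - t) * linear_demand x + t * linear_demand y"
    unfolding linear_demand_def by simp
qed simp

lemma linear_demand_integral:
  assumes "0 \<le> X"
  shows "integral {0..X} linear_demand = (if X \<le> 1 then X - X^2 / 2 else 1 / 2)"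
proof -
  have slope: "integral {0..Y} linear_demand = Y - Y^2 / 2" if "0 \<le> Y" "Y \<le> 1" for Y
  proof -
    have "integral {0..Y} linear_demand = integral {0..Y} (\<lambda>q. 1 + (-1) * (q - 0))"
      using that by (intro integral_cong) (auto simp: linear_demand_def)
    then show ?thesis using integral_affine[of 0 Y 1 "-1"] that by simp
  qed
  show ?thesis
  proof (cases "X \<le> 1")
    case False
    have "integral {0..X} linear_demand = integral {0..1} linear_demand + integral {1..X} linear_demand"
      using Henstock_Kurzweil_Integration.integral_combine[where a=0 and c=1 and b=X and f=linear_demand]
        integrable_continuous_interval[OF linear_demand_continuous] False by simp
    moreover have "integral {1..X} linear_demand = integral {1..X} (\<lambda>_. 0)"
      by (intro integral_cong) (auto simp: linear_demand_def)
    ultimately show ?thesis using slope[of 1] False by simp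
  qed (use slope assms in simp)
qed

lemma linear_demand_model: "cournot_assms 1 linear_demand (\<lambda>n x. 0)"
proof -
  have "cost_assm (\<lambda>x. 0)"
    by (simp add: cost_assm_def convex_on_const mono_on_const)
  moreover have "rderiv0 (\<lambda>x. 0) = 0"
    by (rule rderiv0_eq) (auto intro!: derivative_eq_intros)
  ultimately show ?thesis
    using linear_demand_price_assm
    by (auto simp: cournot_assms_def linear_demand_def intro!: exI[of _ 1])
qed

lemma linear_demand_welfare:
  assumes "0 \<le> y 0"
  shows "welfare 1 linear_demand (\<lambda>n x. 0) y = (if y 0 \<le> 1 then y 0 - (y 0)^2 / 2 else 1 / 2)"
  using linear_demand_integral[OF assms] unfolding welfare_def total_def by simp

lemma linear_demand_social_optimum: "social_optimum 1 linear_demand (\<lambda>n x. 0) (\<lambda>n. 1)"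
  unfolding social_optimum_def
proof (intro conjI allI impI)
  fix y assume "nonneg_profile 1 y"
  then have "0 \<le> y 0" by (simp add: nonneg_profile_def)
  moreover have "y 0 - (y 0)^2 / 2 \<le> 1 / 2"
    using sum_squares_ge_zero[of 0 "y 0 - 1"] by (simp add: power2_eq_square algebra_simps)
  ultimately show "welfare 1 linear_demand (\<lambda>n x. 0) y \<le> welfare 1 linear_demand (\<lambda>n x. 0) (\<lambda>n. 1)"
    using linear_demand_welfare[of y] linear_demand_welfare[of "\<lambda>n. 1"] by simp
qed (simp add: nonneg_profile_def)

lemma linear_demand_monopoly_output: "monopoly_output 1 linear_demand (\<lambda>n x. 0) (\<lambda>n. 1 / 2)"
  unfolding monopoly_output_def
proof (intro conjI allI impI)
  have profit: "total_profit 1 linear_demand (\<lambda>n x. 0) y = max (1 - y 0) 0 * y 0" for y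
    unfolding total_profit_def total_def by (simp add: linear_demand_def)
  fix y assume "nonneg_profile 1 y"
  then have "0 \<le> y 0" by (simp add: nonneg_profile_def)
  moreover have "(1 - y 0) * y 0 \<le> 1 / 4"
    using sum_squares_ge_zero[of 0 "y 0 - 1 / 2"] by (simp add: power2_eq_square algebra_simps)
  ultimately show "total_profit 1 linear_demand (\<lambda>n x. 0) y
      \<le> total_profit 1 linear_demand (\<lambda>n x. 0) (\<lambda>n. 1 / 2)"
    unfolding profit by (simp add: max_def)
qed (simp add: nonneg_profile_def)

(* The bound of part (b) is attained: the monopoly sells 1/2 and the social optimum 1, so
   c = d = 1 and the efficiency is (3/8) / (1/2) = 3/4. *)
lemma tight_example:
  "\<exists>(N'::nat) (p'::real \<Rightarrow> real) (C'::nat \<Rightarrow> real \<Rightarrow> real) (yS::nat \<Rightarrow> real) (yP::nat \<Rightarrow> real).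
     cournot_assms N' p' C' \<and> convex_on {0..} p'
     \<and> social_optimum N' p' C' yS \<and> monopoly_output N' p' C' yP
     \<and> p' (total N' yP) \<noteq> p' (total N' yS)
     \<and> p' differentiable (at (total N' yP))
     \<and> cbar p' (total N' yS) (total N' yP) = 1
     \<and> efficiency N' p' C' yS yP = 3 / 4"
proof -
  define C0 :: "nat \<Rightarrow> real \<Rightarrow> real" where "C0 = (\<lambda>n x. 0)"
  define yS yP :: "nat \<Rightarrow> real" where "yS = (\<lambda>n. 1)" and "yP = (\<lambda>n. 1 / 2)"
  have totals: "total 1 yS = 1" "total 1 yP = 1 / 2" by (simp_all add: total_def yS_def yP_def)
  have deriv: "(linear_demand has_real_derivative -1) (at (total 1 yP))"
    unfolding totals using linear_demand_deriv_slope[of "1 / 2" UNIV] by simp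
  then have "linear_demand differentiable (at (total 1 yP))"
    using real_differentiable_def by blast
  moreover have "cbar linear_demand (total 1 yS) (total 1 yP) = 1"
    using DERIV_imp_deriv[OF deriv] unfolding totals by (simp add: cbar_def linear_demand_def)
  moreover have "welfare 1 linear_demand C0 yS = 1 / 2" "welfare 1 linear_demand C0 yP = 3 / 8"
    using linear_demand_welfare[of yS] linear_demand_welfare[of yP]
    by (simp_all add: C0_def yS_def yP_def power2_eq_square)
  then have "efficiency 1 linear_demand C0 yS yP = 3 / 4"
    unfolding efficiency_def by (simp only:) simp
  moreover have "linear_demand (total 1 yP) \<noteq> linear_demand (total 1 yS)"
    unfolding totals by (simp add: linear_demand_def)
  ultimately show ?thesis
    using linear_demand_model linear_demand_convex linear_demand_social_optimum
      linear_demand_monopoly_output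
    unfolding C0_def yS_def yP_def by blast
qed

theorem theorem3:
  fixes N :: nat and p :: "real \<Rightarrow> real" and C :: "nat \<Rightarrow> real \<Rightarrow> real"
    and xS xP :: "nat \<Rightarrow> real"
  assumes model: "cournot_assms N p C"
    and pconv: "convex_on {0..} p"
    and soc: "social_optimum N p C xS"
    and mon: "monopoly_output N p C xP"
  shows "(p (total N xP) = p (total N xS) \<longrightarrow> efficiency N p C xS xP = 1)
    \<and> (p (total N xP) \<noteq> p (total N xS) \<longrightarrow>
         p differentiable (at (total N xP))
         \<and> 1 \<le> cbar p (total N xS) (total N xP)
         \<and> efficiency N p C xS xP \<ge> 3 / (3 + cbar p (total N xS) (total N xP)))
    \<and> (\<exists>(N'::nat) (p'::real \<Rightarrow> real) (C'::nat \<Rightarrow> real \<Rightarrow> real) (yS::nat \<Rightarrow> real) (yP::nat \<Rightarrow> real).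
         cournot_assms N' p' C' \<and> convex_on {0..} p'
         \<and> social_optimum N' p' C' yS \<and> monopoly_output N' p' C' yP
         \<and> p' (total N' yP) \<noteq> p' (total N' yS)
         \<and> p' differentiable (at (total N' yP))
         \<and> cbar p' (total N' yS) (total N' yP) = 1
         \<and> efficiency N' p' C' yS yP = 3 / 4)"
  using efficiency_one_if_equal_prices[OF model soc mon]
    efficiency_bound_if_distinct_prices[OF model pconv soc mon]
    tight_example
  by blast

end
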